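(* Let $\kappa > 1$ and let $x_1 = \dfrac{\sqrt{2}}{\sqrt{(\kappa-1)(\pi(\kappa-1)+2)}}$. Then for every $x \geq x_1$, \[ \kappa x\, R(x) \geq 1. \]
   Context: $Q$ denotes the Gaussian $Q$-function, $Q(x) = \frac{1}{\sqrt{2\pi}}\int_x^\infty e^{-t^2/2}\,dt$, and for $x \geq 0$, $R(x) = \sqrt{2\pi}\, Q(x)\, e^{x^2/2}$ (the Mills' ratio). *)

theory Defs
  imports "HOL-Analysis.Analysis"
begin

definition gaussQ :: "real \<Rightarrow> real" where
  "gaussQ x = (1 / sqrt (2 * pi)) * integral {x..} (\<lambda>t. exp (- (t^2) / 2))"

definition millsR :: "real \<Rightarrow> real" where
  "millsR x = sqrt (2 * pi) * gaussQ x * exp (x^2 / 2)"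

end

theory Submission
  imports Defs "HOL-Probability.Probability" "HOL-Real_Asymp.Real_Asymp"
begin

(* The theorem follows from Boyd's lower bound for the Mills ratio,
     R(x) \<ge> \<pi> / ((\<pi> - 1) x + sqrt (x^2 + 2\<pi>))   for x \<ge> 0,
   together with elementary algebra: for x \<ge> x1 one has
   sqrt (x^2 + 2\<pi>) \<le> (\<pi>(\<kappa> - 1) + 1) x, so the denominator is at most \<kappa> \<pi> x.
   Boyd's bound is the statement that J = T - b \<phi> is nonnegative on [0, \<infinity>),
   where \<phi>(t) = exp (-t^2/2), T(y) is the upper tail integral of \<phi> and b is
   the bound.  We have J(0) = 0, J \<rightarrow> 0 at infinity, and J'(x) = \<phi>(x) c(x)
   where the sign of c(x) is that of (\<pi> - 3) sqrt (x^2 + 2\<pi>) - x, a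
   nonincreasing function.  So J first increases and then decreases, and a
   general lemma about such functions gives J \<ge> 0.
   The file develops: (1) that general sign-change lemma, (2) the Gaussian
   kernel and its tail integral (value at 0, limit, derivative, relation to
   millsR), (3) Boyd's bound and its derivative identity, (4) the theorem. *)

section \<open>A function whose derivative changes sign once\<close>

lemma nonneg_if_derivative_changes_sign_once:
  fixes f f' k :: "real \<Rightarrow> real"
  assumes deriv: "\<And>y. a \<le> y \<Longrightarrow> (f has_real_derivative f' y) (at y)"
    and up: "\<And>y. a \<le> y \<Longrightarrow> k y \<ge> 0 \<Longrightarrow> f' y \<ge> 0"
    and down: "\<And>y. a \<le> y \<Longrightarrow> k y \<le> 0 \<Longrightarrow> f' y \<le> 0"
    and k_antimono: "\<And>y z. a \<le> y \<Longrightarrow> y \<le> z \<Longrightarrow> k z \<le> k y"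
    and start: "f a \<ge> 0"
    and limit: "(f \<longlongrightarrow> L) at_top" "L \<ge> 0"
    and x: "a \<le> x"
  shows "f x \<ge> 0"
proof (cases "k x \<ge> 0")
  case True
  have "f a \<le> f x"
  proof (rule DERIV_nonneg_imp_nondecreasing[OF x])
    fix y assume y: "a \<le> y" "y \<le> x"
    with True k_antimono have "k y \<ge> 0" by force
    then show "\<exists>d. (f has_real_derivative d) (at y) \<and> d \<ge> 0"
      using deriv up y by blast
  qed
  with start show ?thesis by simp
next
  case False
  have "f y \<le> f x" if y: "x \<le> y" for y
  proof (rule DERIV_nonpos_imp_nonincreasing[OF y])
    fix z assume z: "x \<le> z" "z \<le> y"
    with False k_antimono x have "k z \<le> 0" by force
    then show "\<exists>d. (f has_real_derivative d) (at z) \<and> d \<le> 0"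
      using deriv down x z by (meson order_trans)
  qed
  then have "L \<le> f x"
    by (intro tendsto_upperbound[OF limit(1)]) (auto simp: eventually_at_top_linorder)
  with limit(2) show ?thesis by simp
qed

section \<open>The Gaussian kernel and its upper tail\<close>

definition gauss :: "real \<Rightarrow> real" where
  "gauss t = exp (- (t^2) / 2)"

lemma gauss_pos: "gauss t > 0"
  unfolding gauss_def by simp

(* The kernel is the standard normal density up to the factor sqrt (2\<pi>);
   this gives integrability and the total mass for free. *)
lemma gauss_eq_normal_density: "gauss t = sqrt (2 * pi) * normal_density 0 1 t"
  unfolding gauss_def normal_density_def by (simp add: field_simps)

lemma gauss_integrable: "integrable lborel gauss"
  unfolding gauss_eq_normal_density by (intro integrable_mult_right) simp

lemma gauss_total: "integral\<^sup>L lborel gauss = sqrt (2 * pi)"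
  unfolding gauss_eq_normal_density by simp

lemma gauss_integral_eq_lebesgue:
  assumes "A \<in> sets borel"
  shows "gauss integrable_on A" "integral A gauss = (LBINT t:A. gauss t)"
proof -
  have "set_integrable lborel A gauss"
    unfolding set_integrable_def using assms
    by (intro integrable_mult_indicator gauss_integrable) simp
  from set_borel_integral_eq_integral[OF this]
  show "gauss integrable_on A" "integral A gauss = (LBINT t:A. gauss t)" by simp_all
qed

lemma gauss_has_integral:
  "A \<in> sets borel \<Longrightarrow> (gauss has_integral integral A gauss) A"
  using gauss_integral_eq_lebesgue(1) by blast

lemma gauss_integral_join:
  assumes "A \<in> sets borel" "B \<in> sets borel" "A \<inter> B = {p}"
  shows "integral (A \<union> B) gauss = integral A gauss + integral B gauss"
proof -
  have "negligible (A \<inter> B)" using assms(3) by simp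
  then have "(gauss has_integral integral A gauss + integral B gauss) (A \<union> B)"
    using gauss_has_integral assms(1,2) by (intro has_integral_Un) auto
  then show ?thesis by (rule integral_unique)
qed

lemma gauss_integral_split: "integral {..y} gauss + integral {y..} gauss = sqrt (2 * pi)"
proof -
  have "{..y} \<inter> {y..} = {y}" "{..y} \<union> {y..} = (UNIV :: real set)" by auto
  then have "integral {..y} gauss + integral {y..} gauss = integral UNIV gauss"
    using gauss_integral_join[of "{..y}" "{y..}" y] by simp
  also have "\<dots> = sqrt (2 * pi)"
    using gauss_integral_eq_lebesgue(2)[of UNIV] gauss_total
    by (simp add: set_lebesgue_integral_def)
  finally show ?thesis .
qed

definition gauss_tail :: "real \<Rightarrow> real" where
  "gauss_tail y = integral {y..} gauss"

lemma millsR_eq_gauss_tail: "millsR x = gauss_tail x * exp (x^2 / 2)"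
proof -
  have "gauss = (\<lambda>t. exp (- (t^2) / 2))" by (simp add: gauss_def fun_eq_iff)
  then show ?thesis unfolding millsR_def gaussQ_def gauss_tail_def by simp
qed

lemma gauss_tail_at_top: "(gauss_tail \<longlongrightarrow> 0) at_top"
proof -
  have "((\<lambda>y. \<integral>t. indicator {..y} t *\<^sub>R gauss t \<partial>lborel) \<longlongrightarrow> \<integral>t. gauss t \<partial>lborel) at_top"
    by (rule tendsto_integral_at_top) (auto intro: gauss_integrable)
  moreover have "(\<integral>t. indicator {..y} t *\<^sub>R gauss t \<partial>lborel) = integral {..y} gauss" for y
    using gauss_integral_eq_lebesgue(2)[of "{..y}"] by (simp add: set_lebesgue_integral_def)
  ultimately have "((\<lambda>y. sqrt (2 * pi) - integral {..y} gauss) \<longlongrightarrow> sqrt (2 * pi) - sqrt (2 * pi)) at_top"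
    using gauss_total by (intro tendsto_intros) simp
  moreover have "gauss_tail = (\<lambda>y. sqrt (2 * pi) - integral {..y} gauss)"
    using gauss_integral_split by (simp add: gauss_tail_def fun_eq_iff algebra_simps)
  ultimately show ?thesis by simp
qed

(* By symmetry of the kernel, half of the mass lies on each side of 0. *)
lemma gauss_tail_0: "gauss_tail 0 = sqrt (2 * pi) / 2"
proof -
  have "integral {..0} gauss = (LBINT t:{..0}. gauss t)"
    using gauss_integral_eq_lebesgue(2) by simp
  also have "\<dots> = (LBINT t:{t. -t \<in> {..0}}. gauss (-t))"
    by (rule set_integral_reflect)
  also have "\<dots> = (LBINT t:{0..}. gauss t)"
    by (simp add: gauss_def atLeast_def)
  also have "\<dots> = gauss_tail 0"
    unfolding gauss_tail_def using gauss_integral_eq_lebesgue(2) by simp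
  finally show ?thesis using gauss_integral_split[of 0] unfolding gauss_tail_def by simp
qed

(* Fundamental theorem of calculus for the tail: T' = -\<phi>.  Locally the tail is
   an integral over [y, x+1] plus a constant. *)
lemma gauss_tail_deriv: "(gauss_tail has_real_derivative - gauss x) (at x)"
proof -
  let ?a = "x - 1" and ?b = "x + 1"
  have "continuous_on {?a..?b} gauss" unfolding gauss_def by (auto intro!: continuous_intros)
  then have "((\<lambda>y. integral {y..?b} gauss) has_real_derivative - gauss x) (at x within {?a..?b})"
    by (rule integral_has_real_derivative') auto
  then have local: "((\<lambda>y. integral {y..?b} gauss + gauss_tail ?b) has_real_derivative - gauss x) (at x)"
    using at_within_Icc_at[of ?a x ?b] by (auto intro!: derivative_eq_intros)
  show ?thesis
  proof (rule has_field_derivative_transform_within_open[OF local, of "{?a<..<?b}"])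
    fix y assume "y \<in> {?a<..<?b}"
    then have "{y..?b} \<inter> {?b..} = {?b}" "{y..?b} \<union> {?b..} = {y..}" by auto
    then show "integral {y..?b} gauss + gauss_tail ?b = gauss_tail y"
      unfolding gauss_tail_def using gauss_integral_join[of "{y..?b}" "{?b..}" ?b] by simp
  qed auto
qed

lemma gauss_deriv: "(gauss has_real_derivative (- x * gauss x)) (at x)"
  unfolding gauss_def by (auto intro!: derivative_eq_intros)

lemma gauss_at_top: "(gauss \<longlongrightarrow> 0) at_top"
  unfolding gauss_def[abs_def] by real_asymp

section \<open>Boyd's lower bound for the Mills ratio\<close>

definition boyd_root :: "real \<Rightarrow> real" where
  "boyd_root x = sqrt (x^2 + 2 * pi)"

definition boyd_den :: "real \<Rightarrow> real" where
  "boyd_den x = (pi - 1) * x + boyd_root x"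

definition boyd :: "real \<Rightarrow> real" where
  "boyd x = pi / boyd_den x"

lemma boyd_root_pos: "boyd_root x > 0"
  unfolding boyd_root_def by (simp add: add_nonneg_pos)

lemma boyd_root_sq: "boyd_root x ^ 2 = x^2 + 2 * pi"
  unfolding boyd_root_def by (simp add: add_nonneg_pos)

lemma boyd_den_pos: "x \<ge> 0 \<Longrightarrow> boyd_den x > 0"
  unfolding boyd_den_def using boyd_root_pos[of x] pi_gt3 by (simp add: add_nonneg_pos)

(* The quantity whose sign decides the monotonicity of T - b \<phi>. *)
definition boyd_switch :: "real \<Rightarrow> real" where
  "boyd_switch x = (pi - 3) * boyd_root x - x"

(* Since 0 < \<pi> - 3 < 1 and sqrt (x^2 + 2\<pi>) grows at most as fast as x,
   the switch is nonincreasing on [0, \<infinity>). *)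
lemma boyd_switch_antimono:
  assumes "0 \<le> y" "y \<le> x"
  shows "boyd_switch x \<le> boyd_switch y"
proof -
  have roots: "(boyd_root x - boyd_root y) * (boyd_root x + boyd_root y) = (x - y) * (x + y)"
    using boyd_root_sq[of x] boyd_root_sq[of y] by (simp add: algebra_simps power2_eq_square)
  have "x \<le> boyd_root x" "y \<le> boyd_root y"
    unfolding boyd_root_def using assms by (simp_all add: real_le_rsqrt)
  with assms have "(x - y) * (x + y) \<le> (x - y) * (boyd_root x + boyd_root y)"
    by (intro mult_left_mono) auto
  then have "(boyd_root x - boyd_root y) * (boyd_root x + boyd_root y)
      \<le> (x - y) * (boyd_root x + boyd_root y)"
    unfolding roots .
  then have growth: "boyd_root x - boyd_root y \<le> x - y"
    using boyd_root_pos[of x] boyd_root_pos[of y] by simp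
  have "boyd_root y \<le> boyd_root x"
    unfolding boyd_root_def using assms by (simp add: power_mono)
  with growth have "(pi - 3) * (boyd_root x - boyd_root y) \<le> x - y"
    using pi_gt3 pi_less_4 by (smt (verit) mult_left_le_one_le)
  then show ?thesis unfolding boyd_switch_def by (simp add: algebra_simps)
qed

lemma boyd_defect_identity:
  fixes x s p d :: real
  assumes "s^2 = x^2 + 2 * p" "s > 0" "x \<ge> 0" "d = (p - 1) * x + s" "d > 0"
  shows "x * (p / d) + p * ((p - 1) + x / s) / d^2 - 1
         = 2 * p^2 * ((p - 3) * s - x) / ((s + x)^2 * d^2 * s)"
proof -
  have "s + x \<noteq> 0" "d \<noteq> 0" "s \<noteq> 0" using assms by auto
  then show ?thesis
    apply (simp add: field_simps)
    using assms(1,4) by algebra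
qed

(* x b(x) - b'(x) - 1; the derivative of T - b \<phi> equals \<phi> times this defect. *)
definition boyd_defect :: "real \<Rightarrow> real" where
  "boyd_defect x = x * boyd x + pi * ((pi - 1) + x / boyd_root x) / boyd_den x ^ 2 - 1"

lemma boyd_defect_sign:
  assumes "x \<ge> 0"
  shows "boyd_switch x \<ge> 0 \<Longrightarrow> boyd_defect x \<ge> 0"
    and "boyd_switch x \<le> 0 \<Longrightarrow> boyd_defect x \<le> 0"
proof -
  have eq: "boyd_defect x = 2 * pi^2 * boyd_switch x
      / ((boyd_root x + x)^2 * boyd_den x^2 * boyd_root x)"
    unfolding boyd_defect_def boyd_def boyd_switch_def
    using boyd_defect_identity[OF boyd_root_sq boyd_root_pos assms boyd_den_def boyd_den_pos[OF assms]] .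
  have "(boyd_root x + x)^2 * boyd_den x^2 * boyd_root x > 0"
    using boyd_root_pos[of x] boyd_den_pos[OF assms] assms by (simp add: add_pos_nonneg)
  then show "boyd_switch x \<ge> 0 \<Longrightarrow> boyd_defect x \<ge> 0"
    and "boyd_switch x \<le> 0 \<Longrightarrow> boyd_defect x \<le> 0"
    unfolding eq by (simp_all add: divide_nonpos_pos mult_nonneg_nonpos)
qed

lemma boyd_deriv:
  assumes "x \<ge> 0"
  shows "(boyd has_real_derivative - pi * ((pi - 1) + x / boyd_root x) / boyd_den x ^ 2) (at x)"
proof -
  have "(boyd_root has_real_derivative x / boyd_root x) (at x)"
    using boyd_root_pos[of x] boyd_root_sq[of x] unfolding boyd_root_def
    by (auto intro!: derivative_eq_intros simp: field_simps)
  then have "(boyd_den has_real_derivative (pi - 1) + x / boyd_root x) (at x)"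
    unfolding boyd_den_def[abs_def] by (auto intro!: derivative_eq_intros)
  then show ?thesis
    unfolding boyd_def[abs_def] using boyd_den_pos[OF assms]
    by (auto intro!: derivative_eq_intros simp: power2_eq_square)
qed

definition boyd_gap :: "real \<Rightarrow> real" where
  "boyd_gap x = gauss_tail x - boyd x * gauss x"

(* Using T' = -\<phi> and \<phi>' = -x \<phi>: the gap has derivative \<phi> times the defect. *)
lemma boyd_gap_deriv:
  assumes "x \<ge> 0"
  shows "(boyd_gap has_real_derivative gauss x * boyd_defect x) (at x)"
proof -
  have "(boyd_gap has_real_derivative
      - gauss x - (- pi * ((pi - 1) + x / boyd_root x) / boyd_den x ^ 2 * gauss x
                   + boyd x * (- x * gauss x))) (at x)"
    unfolding boyd_gap_def[abs_def]
    by (auto intro!: derivative_eq_intros gauss_tail_deriv boyd_deriv[OF assms] gauss_deriv)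
  then show ?thesis
    using boyd_den_pos[OF assms] boyd_root_pos[of x]
    by (simp add: boyd_defect_def boyd_def field_simps)
qed

(* At 0 the bound is exact: \<pi> / sqrt (2\<pi>) = sqrt (2\<pi>) / 2 = T(0). *)
lemma boyd_gap_0: "boyd_gap 0 = 0"
proof -
  have "sqrt (2 * pi) * sqrt (2 * pi) = 2 * pi" by simp
  then have "sqrt (2 * pi) / 2 = pi / sqrt (2 * pi)" by (simp add: field_simps)
  then show ?thesis
    unfolding boyd_gap_def boyd_def boyd_den_def boyd_root_def gauss_tail_0 gauss_def by simp
qed

(* Boyd's bound is at most \<pi>/sqrt (2\<pi>), so b \<phi> vanishes at infinity with \<phi>. *)
lemma boyd_gap_at_top: "(boyd_gap \<longlongrightarrow> 0) at_top"
proof -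
  have bound: "0 \<le> boyd x * gauss x \<and> boyd x * gauss x \<le> pi / sqrt (2 * pi) * gauss x"
    if "x \<ge> 0" for x
  proof -
    have "sqrt (2 * pi) \<le> boyd_root x" unfolding boyd_root_def by simp
    moreover have "0 \<le> (pi - 1) * x" using that pi_gt3 by simp
    ultimately have "sqrt (2 * pi) \<le> boyd_den x"
      unfolding boyd_den_def by linarith
    then have "boyd x \<le> pi / sqrt (2 * pi)"
      unfolding boyd_def using boyd_den_pos[OF that] by (intro divide_left_mono) auto
    moreover have "0 \<le> gauss x" using gauss_pos[of x] by (rule less_imp_le)
    ultimately have "boyd x * gauss x \<le> pi / sqrt (2 * pi) * gauss x"
      by (rule mult_right_mono)
    moreover have "0 \<le> boyd x * gauss x"
      unfolding boyd_def using boyd_den_pos[OF that] gauss_pos[of x] by simp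
    ultimately show ?thesis by blast
  qed
  have "((\<lambda>x. pi / sqrt (2 * pi) * gauss x) \<longlongrightarrow> pi / sqrt (2 * pi) * 0) at_top"
    by (intro tendsto_intros gauss_at_top)
  moreover have "\<forall>\<^sub>F x in at_top. 0 \<le> boyd x * gauss x"
    and "\<forall>\<^sub>F x in at_top. boyd x * gauss x \<le> pi / sqrt (2 * pi) * gauss x"
    using bound by (auto intro: eventually_at_top_linorderI)
  ultimately have "((\<lambda>x. boyd x * gauss x) \<longlongrightarrow> 0) at_top"
    using tendsto_sandwich[of "\<lambda>_. 0" "\<lambda>x. boyd x * gauss x"] by simp
  then have "((\<lambda>x. gauss_tail x - boyd x * gauss x) \<longlongrightarrow> 0 - 0) at_top"
    by (intro tendsto_intros gauss_tail_at_top)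
  then show ?thesis unfolding boyd_gap_def[abs_def] by simp
qed

lemma boyd_gap_nonneg:
  assumes "x \<ge> 0"
  shows "boyd_gap x \<ge> 0"
proof (rule nonneg_if_derivative_changes_sign_once[where a = 0 and L = 0, OF boyd_gap_deriv _ _ boyd_switch_antimono])
  fix y :: real assume "0 \<le> y"
  then show "boyd_switch y \<ge> 0 \<Longrightarrow> gauss y * boyd_defect y \<ge> 0"
    and "boyd_switch y \<le> 0 \<Longrightarrow> gauss y * boyd_defect y \<le> 0"
    using boyd_defect_sign gauss_pos[of y] by (auto intro: mult_nonneg_nonpos)
qed (use assms boyd_gap_0 boyd_gap_at_top in auto)

theorem millsR_ge_boyd:
  assumes "x \<ge> 0"
  shows "boyd x \<le> millsR x"
proof -
  have "boyd x * gauss x * exp (x^2 / 2) \<le> gauss_tail x * exp (x^2 / 2)"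
    using boyd_gap_nonneg[OF assms] unfolding boyd_gap_def by (simp add: mult_right_mono)
  moreover have "gauss x * exp (x^2 / 2) = 1"
    unfolding gauss_def by (simp add: exp_add[symmetric])
  ultimately show ?thesis unfolding millsR_eq_gauss_tail by (simp add: mult.assoc)
qed

section \<open>The threshold x1\<close>

(* Beyond x1 the square root in Boyd's denominator is at most (\<pi> (\<kappa> - 1) + 1) x,
   so the denominator is at most \<kappa> \<pi> x. *)
lemma boyd_den_le_beyond_threshold:
  fixes \<kappa> x :: real
  assumes "\<kappa> > 1"
    and x1: "x \<ge> sqrt 2 / sqrt ((\<kappa> - 1) * (pi * (\<kappa> - 1) + 2))"
  shows "x > 0" "boyd_den x \<le> \<kappa> * pi * x"
proof -
  define t where "t = \<kappa> - 1"
  define D where "D = t * (pi * t + 2)"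
  have "t > 0" using assms(1) t_def by simp
  then have D: "D > 0" unfolding D_def by (simp add: add_pos_pos)
  have x1': "sqrt 2 / sqrt D \<le> x" using x1 unfolding D_def t_def .
  moreover have "sqrt 2 / sqrt D > 0" using D by simp
  ultimately show "x > 0" by linarith
  from x1' have "(sqrt 2 / sqrt D)^2 \<le> x^2" using D by (intro power_mono) auto
  then have "2 / D \<le> x^2" using D by (simp add: power_divide)
  then have "2 \<le> x^2 * D" using D by (simp add: field_simps)
  then have "x^2 + 2 * pi \<le> x^2 + pi * (x^2 * D)" by simp
  also have "\<dots> = ((pi * t + 1) * x)^2"
    unfolding D_def by (simp add: algebra_simps power2_eq_square)
  finally have "boyd_root x \<le> (pi * t + 1) * x"
    unfolding boyd_root_def using \<open>x > 0\<close> \<open>t > 0\<close> by (intro real_le_lsqrt) auto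
  then show "boyd_den x \<le> \<kappa> * pi * x"
    unfolding boyd_den_def t_def by (simp add: algebra_simps)
qed

theorem lemma2:
  fixes \<kappa> x :: real
  assumes "\<kappa> > 1"
    and "x \<ge> sqrt 2 / sqrt ((\<kappa> - 1) * (pi * (\<kappa> - 1) + 2))"
  shows "\<kappa> * x * millsR x \<ge> 1"
proof -
  note x = boyd_den_le_beyond_threshold[OF assms]
  have "1 \<le> \<kappa> * x * boyd x"
    unfolding boyd_def using x boyd_den_pos[of x] by (simp add: field_simps)
  also have "\<dots> \<le> \<kappa> * x * millsR x"
    using millsR_ge_boyd[of x] x(1) assms(1) by (intro mult_left_mono) auto
  finally show ?thesis .
qed

end
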